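(* Let $K$ be a field of characteristic $0$, $S=K[x_1,\dots,x_n]$, and let $I,J\subset S$ be Borel-fixed ideals, where $I$ has minimal monomial generators $f_1,\dots,f_m$ all of the same degree. Let $\varphi\in\mathrm{GL}_n(K)$ be upper triangular. Then $\widetilde\varphi(Z_t(I,S/J))\subset Z_t(I,S/J)$ for every $t$.
   Context: A matrix $\varphi=(a_{ij})\in\mathrm{GL}_n(K)$ acts on $S$ by $\varphi(f)(x_1,\dots,x_n)=f(\sum_k a_{k1}x_k,\dots,\sum_k a_{kn}x_k)$. A monomial ideal is Borel-fixed if $\varphi(I)=I$ for all invertible upper triangular $\varphi$ (equivalently in characteristic $0$: $fx_j\in I$, $i<j$ imply $fx_i\in I$ for monomials $f$). Let $F=\bigoplus_{i=1}^m S(-\deg f_i)$ with basis $e_1,\dots,e_m$, $\phi(e_i)=f_i$, and $K(I,S/J)=\bigwedge^\bullet F\otimes_S S/J$ the Koszul complex with differential induced by $\phi$; $Z_t(I,S/J)$ are its cycles in position $t$. For upper triangular $\varphi$: since $\varphi(J)=J$, $\varphi$ induces an automorphism $\varphi(h+J)=\varphi(h)+J$ of $S/J$; since $\varphi(I)=I$ and the $f_i$ have the same degree, one writes uniquely $\varphi(f_i)=\sum_j c_{ij}f_j$ with $c_{ij}\in K$, and sets $\varphi(e_i)=\sum_j c_{ij}e_j$. Then $\widetilde\varphi:K_t(I,S/J)\to K_t(I,S/J)$ is the $K$-linear map with $\widetilde\varphi(e_{u_1}\wedge\cdots\wedge e_{u_t}\otimes h)=\varphi(e_{u_1})\wedge\cdots\wedge\varphi(e_{u_t})\otimes\varphi(h)$.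 *)

theory Defs
  imports Main "HOL-Library.Poly_Mapping"
begin

text \<open>Monomials are exponent vectors nat \<Rightarrow>0 nat (variable x_(i+1) has index i);
  polynomials are finitely supported coefficient functions on monomials.\<close>

type_synonym 'a mpoly = "(nat \<Rightarrow>\<^sub>0 nat) \<Rightarrow>\<^sub>0 'a"

definition in_S :: "nat \<Rightarrow> ('a::zero) mpoly \<Rightarrow> bool" where
  "in_S n p \<longleftrightarrow> (\<forall>\<alpha>\<in>Poly_Mapping.keys p. Poly_Mapping.keys \<alpha> \<subseteq> {..<n})"

definition const :: "'a::zero \<Rightarrow> 'a mpoly" where
  "const c = Poly_Mapping.single 0 c"

definition monom :: "(nat \<Rightarrow>\<^sub>0 nat) \<Rightarrow> ('a::{zero,one}) mpoly" where
  "monom \<alpha> = Poly_Mapping.single \<alpha> 1"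

definition var :: "nat \<Rightarrow> ('a::{zero,one}) mpoly" where
  "var i = monom (Poly_Mapping.single i 1)"

definition mdeg :: "(nat \<Rightarrow>\<^sub>0 nat) \<Rightarrow> nat" where
  "mdeg \<alpha> = (\<Sum>i\<in>Poly_Mapping.keys \<alpha>. Poly_Mapping.lookup \<alpha> i)"

definition is_ideal :: "nat \<Rightarrow> ('a::comm_ring_1) mpoly set \<Rightarrow> bool" where
  "is_ideal n I \<longleftrightarrow> I \<subseteq> {p. in_S n p} \<and> 0 \<in> I \<and>
     (\<forall>p\<in>I. \<forall>q\<in>I. p + q \<in> I) \<and> (\<forall>p\<in>I. \<forall>h. in_S n h \<longrightarrow> h * p \<in> I)"

definition ideal_gen :: "nat \<Rightarrow> ('a::comm_ring_1) mpoly set \<Rightarrow> 'a mpoly set" where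
  "ideal_gen n G = {(\<Sum>g\<in>F. h g * g) | F h. finite F \<and> F \<subseteq> G \<and> (\<forall>g\<in>F. in_S n (h g))}"

definition monomial_ideal :: "nat \<Rightarrow> ('a::comm_ring_1) mpoly set \<Rightarrow> bool" where
  "monomial_ideal n I \<longleftrightarrow> is_ideal n I \<and>
     (\<exists>M. M \<subseteq> {\<alpha>. Poly_Mapping.keys \<alpha> \<subseteq> {..<n}} \<and> I = ideal_gen n (monom ` M))"

text \<open>A matrix is a function A :: nat \<Rightarrow> nat \<Rightarrow> 'a, entry (i,j) for i,j < n
  (0-based indices). phi(f)(x_1..x_n) = f(sum_k a_k1 x_k, ..., sum_k a_kn x_k).\<close>

definition lin_form :: "nat \<Rightarrow> (nat \<Rightarrow> nat \<Rightarrow> 'a::comm_ring_1) \<Rightarrow> nat \<Rightarrow> 'a mpoly" where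
  "lin_form n A j = (\<Sum>k<n. const (A k j) * var k)"

definition act :: "nat \<Rightarrow> (nat \<Rightarrow> nat \<Rightarrow> 'a::comm_ring_1) \<Rightarrow> 'a mpoly \<Rightarrow> 'a mpoly" where
  "act n A f = (\<Sum>\<alpha>\<in>Poly_Mapping.keys f. const (Poly_Mapping.lookup f \<alpha>) *
                   (\<Prod>j\<in>Poly_Mapping.keys \<alpha>. lin_form n A j ^ Poly_Mapping.lookup \<alpha> j))"

definition invertible_mat :: "nat \<Rightarrow> (nat \<Rightarrow> nat \<Rightarrow> 'a::comm_ring_1) \<Rightarrow> bool" where
  "invertible_mat n A \<longleftrightarrow> (\<exists>B. \<forall>i<n. \<forall>j<n.
      (\<Sum>k<n. A i k * B k j) = (if i = j then 1 else 0) \<and>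
      (\<Sum>k<n. B i k * A k j) = (if i = j then 1 else 0))"

definition upper_triangular :: "nat \<Rightarrow> (nat \<Rightarrow> nat \<Rightarrow> 'a::zero) \<Rightarrow> bool" where
  "upper_triangular n A \<longleftrightarrow> (\<forall>i<n. \<forall>j<n. j < i \<longrightarrow> A i j = 0)"

definition borel_fixed :: "nat \<Rightarrow> ('a::comm_ring_1) mpoly set \<Rightarrow> bool" where
  "borel_fixed n I \<longleftrightarrow> monomial_ideal n I \<and>
     (\<forall>A. invertible_mat n A \<and> upper_triangular n A \<longrightarrow> act n A ` I = I)"

text \<open>f_1..f_m (here f 0 .. f (m-1)) are the minimal monomial generators of I,
  all of degree d.\<close>
definition min_mon_gens_same_deg ::
  "nat \<Rightarrow> ('a::comm_ring_1) mpoly set \<Rightarrow> nat \<Rightarrow> (nat \<Rightarrow> 'a mpoly) \<Rightarrow> bool" where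
  "min_mon_gens_same_deg n I m f \<longleftrightarrow>
     inj_on f {..<m} \<and>
     (\<exists>d. \<forall>i<m. \<exists>\<alpha>. f i = monom \<alpha> \<and> Poly_Mapping.keys \<alpha> \<subseteq> {..<n} \<and> mdeg \<alpha> = d) \<and>
     I = ideal_gen n (f ` {..<m}) \<and>
     (\<forall>i<m. \<forall>j<m. i \<noteq> j \<longrightarrow> f j \<notin> ideal_gen n {f i})"

text \<open>An element of K_t(I,S/J) = /^t F \<otimes> S/J is represented by a function
  z :: nat set \<Rightarrow> 'a mpoly giving the coefficient (a representative in S of a class
  of S/J) of e_U = e_u1 \<and> ... \<and> e_ut for U = {u1 < ... < ut} \<subseteq> {..<m}.\<close>

definition koszul_elem :: "nat \<Rightarrow> nat \<Rightarrow> nat \<Rightarrow> (nat set \<Rightarrow> ('a::comm_ring_1) mpoly) \<Rightarrow> bool" where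
  "koszul_elem n m t z \<longleftrightarrow> (\<forall>U. in_S n (z U)) \<and>
     (\<forall>U. \<not> (U \<subseteq> {..<m} \<and> card U = t) \<longrightarrow> z U = 0)"

text \<open>Koszul differential: d(e_u1\<and>..\<and>e_ut \<otimes> h) = sum_k (-1)^(k-1) f_uk e_(U-{uk}) \<otimes> h.
  The coefficient of e_V in d z.\<close>
definition koszul_d :: "nat \<Rightarrow> (nat \<Rightarrow> ('a::comm_ring_1) mpoly) \<Rightarrow> (nat set \<Rightarrow> 'a mpoly) \<Rightarrow> nat set \<Rightarrow> 'a mpoly" where
  "koszul_d m f z V = (\<Sum>u\<in>{..<m} - V. (-1) ^ card {v\<in>V. v < u} * f u * z (insert u V))"

text \<open>Cycles of K_t(I,S/J): d z = 0 in K_(t-1)(I,S/J), i.e. every coefficient lies in J.\<close>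
definition koszul_cycle ::
  "nat \<Rightarrow> nat \<Rightarrow> (nat \<Rightarrow> ('a::comm_ring_1) mpoly) \<Rightarrow> 'a mpoly set \<Rightarrow> nat \<Rightarrow> (nat set \<Rightarrow> 'a mpoly) \<Rightarrow> bool" where
  "koszul_cycle n m f J t z \<longleftrightarrow> koszul_elem n m t z \<and> (\<forall>V. koszul_d m f z V \<in> J)"

definition act_coeff :: "nat \<Rightarrow> (nat \<Rightarrow> nat \<Rightarrow> 'a::comm_ring_1) \<Rightarrow> nat \<Rightarrow> (nat \<Rightarrow> 'a mpoly) \<Rightarrow> nat \<Rightarrow> nat \<Rightarrow> 'a" where
  "act_coeff n A m f i = (THE c. (\<forall>j\<ge>m. c j = 0) \<and> act n A (f i) = (\<Sum>j<m. const (c j) * f j))"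

text \<open>Exterior algebra /^\<bullet> K^m over K: elements are coefficient functions on
  subsets of {..<m} (basis e_W).\<close>
definition ext_mult :: "nat \<Rightarrow> (nat set \<Rightarrow> 'a::comm_ring_1) \<Rightarrow> (nat set \<Rightarrow> 'a) \<Rightarrow> nat set \<Rightarrow> 'a" where
  "ext_mult m x y W = (\<Sum>U\<in>Pow {..<m}. \<Sum>V\<in>Pow {..<m}.
      if U \<inter> V = {} \<and> U \<union> V = W
      then (-1) ^ card {(u, v). u \<in> U \<and> v \<in> V \<and> v < u} * x U * y V else 0)"

definition ext_one :: "nat set \<Rightarrow> 'a::comm_ring_1" where
  "ext_one W = (if W = {} then 1 else 0)"

definition act_e :: "nat \<Rightarrow> (nat \<Rightarrow> nat \<Rightarrow> 'a::comm_ring_1) \<Rightarrow> nat \<Rightarrow> (nat \<Rightarrow> 'a mpoly) \<Rightarrow> nat \<Rightarrow> nat set \<Rightarrow> 'a" where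
  "act_e n A m f i W = (if \<exists>j<m. W = {j} then act_coeff n A m f i (THE j. W = {j}) else 0)"

definition act_wedge :: "nat \<Rightarrow> (nat \<Rightarrow> nat \<Rightarrow> 'a::comm_ring_1) \<Rightarrow> nat \<Rightarrow> (nat \<Rightarrow> 'a mpoly) \<Rightarrow> nat set \<Rightarrow> nat set \<Rightarrow> 'a" where
  "act_wedge n A m f U = foldr (ext_mult m) (map (act_e n A m f) (sorted_list_of_set U)) ext_one"

text \<open>phi-tilde, extended K-linearly:
  phi~(e_U \<otimes> h) = phi(e_u1) \<and> ... \<and> phi(e_ut) \<otimes> phi(h).\<close>
definition koszul_act :: "nat \<Rightarrow> (nat \<Rightarrow> nat \<Rightarrow> 'a::comm_ring_1) \<Rightarrow> nat \<Rightarrow> (nat \<Rightarrow> 'a mpoly) \<Rightarrow> (nat set \<Rightarrow> 'a mpoly) \<Rightarrow> nat set \<Rightarrow> 'a mpoly" where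
  "koszul_act n A m f z W = (\<Sum>U\<in>Pow {..<m}. const (act_wedge n A m f U W) * act n A (z U))"

end

theory Submission
  imports Defs
begin

text \<open>An upper triangular \<open>\<phi>\<close> acts on \<open>S\<close> by a ring automorphism preserving degrees, so
  \<open>\<phi>(f\<^sub>i)\<close> is a form of degree \<open>deg f\<^sub>i\<close> in \<open>I\<close>; since the \<open>f\<^sub>j\<close> are distinct monomials of that
  degree generating \<open>I\<close>, it is a unique \<open>K\<close>-linear combination \<open>\<Sum>\<^sub>j c\<^sub>i\<^sub>j f\<^sub>j\<close>. The Koszul
  differential is the contraction \<open>\<Sum>\<^sub>j f\<^sub>j \<iota>\<^sub>j\<close>, and the contraction \<open>\<iota>\<^sub>j\<close> of a wedge
  \<open>\<phi>(e\<^sub>u\<^sub>1) \<and> \<dots> \<and> \<phi>(e\<^sub>u\<^sub>t)\<close> expands by the graded Leibniz rule into terms \<open>c\<^sub>u\<^sub>j\<close>; substituting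
  \<open>\<Sum>\<^sub>j c\<^sub>u\<^sub>j f\<^sub>j = \<phi>(f\<^sub>u)\<close> gives \<open>d \<circ> \<phi>\<^sup>~ = \<phi>\<^sup>~ \<circ> d\<close>. A cycle \<open>z\<close> has \<open>d z \<equiv> 0\<close> modulo \<open>J\<close>, and
  \<open>\<phi>(J) = J\<close>, so \<open>d(\<phi>\<^sup>~ z) = \<phi>\<^sup>~(d z) \<equiv> 0\<close> modulo \<open>J\<close> as well.\<close>

section \<open>Substitution of linear forms\<close>

lemma sum_single_lookup:
  assumes "finite S" "Poly_Mapping.keys p \<subseteq> S"
  shows "(\<Sum>\<alpha>\<in>S. Poly_Mapping.single \<alpha> (Poly_Mapping.lookup p \<alpha>)) = (p :: 'b \<Rightarrow>\<^sub>0 'c::comm_monoid_add)"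
proof (rule poly_mapping_eqI)
  fix k
  show "Poly_Mapping.lookup (\<Sum>\<alpha>\<in>S. Poly_Mapping.single \<alpha> (Poly_Mapping.lookup p \<alpha>)) k = Poly_Mapping.lookup p k"
    using assms by (auto simp: lookup_sum lookup_single when_def in_keys_iff)
qed

lemma keys_add_monomial:
  "Poly_Mapping.keys ((\<alpha>::nat \<Rightarrow>\<^sub>0 nat) + \<beta>) = Poly_Mapping.keys \<alpha> \<union> Poly_Mapping.keys \<beta>"
  by (auto simp: in_keys_iff lookup_add)

lemma const_zero [simp]: "const 0 = 0" by (simp add: const_def)
lemma const_one [simp]: "const 1 = 1" by (simp add: const_def)
lemma const_mult: "const (a * b) = const a * const b" by (simp add: const_def mult_single)
lemma const_add: "const (a + b) = const a + const b" by (simp add: const_def single_add)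
lemma const_uminus: "const (- a) = - const a" by (simp add: const_def single_uminus)
lemma const_power: "const (a ^ k) = const a ^ k" by (induct k) (simp_all add: const_mult)
lemma const_sum: "const (sum g S) = (\<Sum>x\<in>S. const (g x))"
  by (induct S rule: infinite_finite_induct) (simp_all add: const_add)
lemma const_minus_one_power: "const ((-1) ^ k) = (-1) ^ k"
  by (simp add: const_power const_uminus)

lemma const_mult_monom: "const (c::'a::comm_ring_1) * monom \<alpha> = Poly_Mapping.single \<alpha> c"
  by (simp add: const_def monom_def mult_single)

definition act_monomial :: "nat \<Rightarrow> (nat \<Rightarrow> nat \<Rightarrow> 'a::comm_ring_1) \<Rightarrow> (nat \<Rightarrow>\<^sub>0 nat) \<Rightarrow> 'a mpoly" where
  "act_monomial n A \<alpha> = (\<Prod>j\<in>Poly_Mapping.keys \<alpha>. lin_form n A j ^ Poly_Mapping.lookup \<alpha> j)"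

lemma act_monomial_superset:
  "finite S \<Longrightarrow> Poly_Mapping.keys \<alpha> \<subseteq> S \<Longrightarrow>
    act_monomial n A \<alpha> = (\<Prod>j\<in>S. lin_form n A j ^ Poly_Mapping.lookup \<alpha> j)"
  unfolding act_monomial_def by (intro prod.mono_neutral_left) (auto simp: in_keys_iff)

lemma act_monomial_zero: "act_monomial n A 0 = 1"
  by (simp add: act_monomial_def)

lemma act_monomial_add: "act_monomial n A (\<alpha> + \<beta>) = act_monomial n A \<alpha> * act_monomial n A \<beta>"
proof -
  let ?S = "Poly_Mapping.keys \<alpha> \<union> Poly_Mapping.keys \<beta>"
  have "act_monomial n A (\<alpha> + \<beta>) = (\<Prod>j\<in>?S. lin_form n A j ^ Poly_Mapping.lookup (\<alpha> + \<beta>) j)"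
    by (rule act_monomial_superset) (auto simp: keys_add_monomial)
  also have "\<dots> = (\<Prod>j\<in>?S. lin_form n A j ^ Poly_Mapping.lookup \<alpha> j * lin_form n A j ^ Poly_Mapping.lookup \<beta> j)"
    by (simp add: lookup_add power_add)
  also have "\<dots> = act_monomial n A \<alpha> * act_monomial n A \<beta>"
    using act_monomial_superset[of ?S \<alpha> n A] act_monomial_superset[of ?S \<beta> n A]
    by (simp add: prod.distrib)
  finally show ?thesis .
qed

lemma act_superset:
  assumes "finite S" "Poly_Mapping.keys p \<subseteq> S"
  shows "act n A p = (\<Sum>\<alpha>\<in>S. const (Poly_Mapping.lookup p \<alpha>) * act_monomial n A \<alpha>)"
  unfolding act_def act_monomial_def[symmetric] using assms
  by (intro sum.mono_neutral_left) (auto simp: in_keys_iff)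

lemma act_zero [simp]: "act n A 0 = 0"
  by (simp add: act_def)

lemma act_add: "act n A (p + q) = act n A p + act n A q"
proof -
  let ?S = "Poly_Mapping.keys p \<union> Poly_Mapping.keys q"
  have "act n A (p + q) = (\<Sum>\<alpha>\<in>?S. const (Poly_Mapping.lookup (p + q) \<alpha>) * act_monomial n A \<alpha>)"
    by (rule act_superset) (use keys_add[of p q] in auto)
  also have "\<dots> = (\<Sum>\<alpha>\<in>?S. const (Poly_Mapping.lookup p \<alpha>) * act_monomial n A \<alpha>)
                 + (\<Sum>\<alpha>\<in>?S. const (Poly_Mapping.lookup q \<alpha>) * act_monomial n A \<alpha>)"
    by (simp add: lookup_add const_add distrib_right sum.distrib)
  also have "\<dots> = act n A p + act n A q"
    using act_superset[of ?S p n A] act_superset[of ?S q n A] by simp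
  finally show ?thesis .
qed

lemma act_sum: "act n A (sum g S) = (\<Sum>x\<in>S. act n A (g x))"
  by (induct S rule: infinite_finite_induct) (simp_all add: act_add)

lemma act_single: "act n A (Poly_Mapping.single \<alpha> c) = const c * act_monomial n A \<alpha>"
  by (subst act_superset[of "{\<alpha>}"]) (auto simp: lookup_single)

lemma act_monom: "act n A (monom \<alpha>) = act_monomial n A \<alpha>"
  by (simp add: monom_def act_single)

lemma act_const: "act n A (const c) = const c"
  by (simp add: const_def act_single act_monomial_zero)

lemma act_minus_one_power: "act n A ((-1) ^ k) = (-1) ^ k"
  using act_const[of n A "(-1) ^ k"] by (simp add: const_minus_one_power)

lemma act_mult: "act n A (p * q) = act n A p * act n A q"
proof -
  let ?P = "Poly_Mapping.keys p" and ?Q = "Poly_Mapping.keys q"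
  have "p * q = (\<Sum>\<alpha>\<in>?P. Poly_Mapping.single \<alpha> (Poly_Mapping.lookup p \<alpha>))
              * (\<Sum>\<beta>\<in>?Q. Poly_Mapping.single \<beta> (Poly_Mapping.lookup q \<beta>))"
    by (simp add: sum_single_lookup)
  also have "\<dots> = (\<Sum>\<alpha>\<in>?P. \<Sum>\<beta>\<in>?Q.
      Poly_Mapping.single (\<alpha> + \<beta>) (Poly_Mapping.lookup p \<alpha> * Poly_Mapping.lookup q \<beta>))"
    by (simp only: sum_product mult_single)
  finally have "act n A (p * q) = (\<Sum>\<alpha>\<in>?P. \<Sum>\<beta>\<in>?Q.
      const (Poly_Mapping.lookup p \<alpha>) * act_monomial n A \<alpha> * (const (Poly_Mapping.lookup q \<beta>) * act_monomial n A \<beta>))"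
    by (simp add: act_sum act_single const_mult act_monomial_add mult_ac)
  also have "\<dots> = act n A p * act n A q"
    by (simp only: act_def act_monomial_def[symmetric] sum_product)
  finally show ?thesis .
qed

lemma in_S_add: "in_S n p \<Longrightarrow> in_S n q \<Longrightarrow> in_S n (p + q)"
  unfolding in_S_def using keys_add[of p q] by blast

lemma in_S_mult: "in_S n p \<Longrightarrow> in_S n q \<Longrightarrow> in_S n (p * q)"
  unfolding in_S_def using keys_mult[of p q] by (fastforce simp: keys_add_monomial)

lemma in_S_zero [simp]: "in_S n 0"
  by (simp add: in_S_def)

lemma in_S_one [simp]: "in_S n 1"
  by (simp add: in_S_def)

lemma in_S_const [simp]: "in_S n (const c)"
  by (simp add: in_S_def const_def)

lemma in_S_sum: "(\<And>x. x \<in> S \<Longrightarrow> in_S n (g x)) \<Longrightarrow> in_S n (sum g S)"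
  by (induct S rule: infinite_finite_induct) (auto intro: in_S_add)

lemma in_S_prod: "(\<And>x. x \<in> S \<Longrightarrow> in_S n (g x)) \<Longrightarrow> in_S n (prod g S)"
  by (induct S rule: infinite_finite_induct) (auto intro: in_S_mult)

lemma in_S_power: "in_S n p \<Longrightarrow> in_S n (p ^ k)"
  by (induct k) (auto intro: in_S_mult)

lemma in_S_var: "k < n \<Longrightarrow> in_S n (var k)"
  by (simp add: in_S_def var_def monom_def)

lemma in_S_lin_form: "in_S n (lin_form n A j)"
  unfolding lin_form_def by (auto intro!: in_S_sum in_S_mult in_S_var)

lemma in_S_act: "in_S n (act n A p)"
  unfolding act_def
  by (auto intro!: in_S_sum in_S_mult in_S_prod in_S_power in_S_lin_form)


section \<open>The coefficients \<open>c\<^sub>i\<^sub>j\<close>\<close>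

lemma mdeg_superset:
  "finite S \<Longrightarrow> Poly_Mapping.keys \<alpha> \<subseteq> S \<Longrightarrow> mdeg \<alpha> = (\<Sum>i\<in>S. Poly_Mapping.lookup \<alpha> i)"
  unfolding mdeg_def by (intro sum.mono_neutral_left) (auto simp: in_keys_iff)

lemma mdeg_add: "mdeg (\<alpha> + \<beta>) = mdeg \<alpha> + mdeg \<beta>"
proof -
  let ?S = "Poly_Mapping.keys \<alpha> \<union> Poly_Mapping.keys \<beta>"
  have "mdeg (\<alpha> + \<beta>) = (\<Sum>i\<in>?S. Poly_Mapping.lookup (\<alpha> + \<beta>) i)"
    by (rule mdeg_superset) (auto simp: keys_add_monomial)
  also have "\<dots> = mdeg \<alpha> + mdeg \<beta>"
    using mdeg_superset[of ?S \<alpha>] mdeg_superset[of ?S \<beta>] by (simp add: lookup_add sum.distrib)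
  finally show ?thesis .
qed

lemma mdeg_zero [simp]: "mdeg 0 = 0"
  by (simp add: mdeg_def)

lemma mdeg_eq_0_iff: "mdeg \<gamma> = 0 \<longleftrightarrow> \<gamma> = 0"
proof
  assume "mdeg \<gamma> = 0"
  then show "\<gamma> = 0"
    by (intro poly_mapping_eqI) (auto simp: mdeg_def in_keys_iff)
qed simp

definition homog :: "nat \<Rightarrow> ('a::zero) mpoly \<Rightarrow> bool" where
  "homog d p \<longleftrightarrow> (\<forall>\<beta>\<in>Poly_Mapping.keys p. mdeg \<beta> = d)"

lemma homog_zero [simp]: "homog d 0"
  by (simp add: homog_def)

lemma homog_add: "homog d p \<Longrightarrow> homog d q \<Longrightarrow> homog d (p + q)"
  unfolding homog_def using keys_add[of p q] by blast

lemma homog_sum: "(\<And>x. x \<in> S \<Longrightarrow> homog d (g x)) \<Longrightarrow> homog d (sum g S)"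
  by (induct S rule: infinite_finite_induct) (auto intro: homog_add)

lemma homog_mult: "homog a p \<Longrightarrow> homog b q \<Longrightarrow> homog (a + b) ((p::'a::comm_ring_1 mpoly) * q)"
  unfolding homog_def using keys_mult[of p q] by (fastforce simp: mdeg_add)

lemma homog_one: "homog 0 (1::'a::comm_ring_1 mpoly)"
  by (simp add: homog_def)

lemma homog_power: "homog a p \<Longrightarrow> homog (k * a) ((p::'a::comm_ring_1 mpoly) ^ k)"
  by (induct k) (auto simp: homog_one dest: homog_mult)

lemma homog_prod:
  "(\<And>x. x \<in> S \<Longrightarrow> homog (d x) (g x)) \<Longrightarrow> homog (\<Sum>x\<in>S. d x) (\<Prod>x\<in>S. (g x :: 'a::comm_ring_1 mpoly))"
  by (induct S rule: infinite_finite_induct) (auto simp: homog_one intro: homog_mult)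

lemma homog_lin_form: "homog 1 (lin_form n A j)"
  unfolding lin_form_def
  by (rule homog_sum) (simp add: homog_def mdeg_def const_def var_def monom_def mult_single)

lemma homog_act_monomial: "homog (mdeg \<alpha>) (act_monomial n A \<alpha>)"
proof -
  have "homog (\<Sum>j\<in>Poly_Mapping.keys \<alpha>. Poly_Mapping.lookup \<alpha> j * 1) (act_monomial n A \<alpha>)"
    unfolding act_monomial_def by (intro homog_prod homog_power homog_lin_form)
  then show ?thesis by (simp add: mdeg_def)
qed

lemma lookup_mult_monom_same_degree:
  assumes "mdeg \<beta> = mdeg \<alpha>"
  shows "Poly_Mapping.lookup (q * monom \<alpha>) \<beta> =
    (if \<alpha> = \<beta> then Poly_Mapping.lookup q 0 else (0::'a::comm_ring_1))"
proof -
  let ?S = "insert 0 (Poly_Mapping.keys q)"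
  have "q * monom \<alpha> = (\<Sum>\<gamma>\<in>?S. Poly_Mapping.single \<gamma> (Poly_Mapping.lookup q \<gamma>)) * Poly_Mapping.single \<alpha> 1"
    using sum_single_lookup[of ?S q, OF _ subset_insertI] by (simp add: monom_def)
  also have "\<dots> = (\<Sum>\<gamma>\<in>?S. Poly_Mapping.single (\<gamma> + \<alpha>) (Poly_Mapping.lookup q \<gamma>))"
    by (simp add: sum_distrib_right mult_single)
  finally have "Poly_Mapping.lookup (q * monom \<alpha>) \<beta> =
      (\<Sum>\<gamma>\<in>?S. if \<gamma> + \<alpha> = \<beta> then Poly_Mapping.lookup q \<gamma> else 0)"
    by (simp add: lookup_sum lookup_single when_def)
  also have "\<dots> = (\<Sum>\<gamma>\<in>?S. if \<gamma> = 0 then (if \<alpha> = \<beta> then Poly_Mapping.lookup q 0 else 0) else 0)"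
  proof (rule sum.cong)
    fix \<gamma>
    have "\<gamma> + \<alpha> = \<beta> \<Longrightarrow> \<gamma> = 0"
      using assms by (metis add_cancel_right_left mdeg_add mdeg_eq_0_iff)
    then show "(if \<gamma> + \<alpha> = \<beta> then Poly_Mapping.lookup q \<gamma> else 0) =
        (if \<gamma> = 0 then (if \<alpha> = \<beta> then Poly_Mapping.lookup q 0 else 0) else 0)"
      by auto
  qed simp
  also have "\<dots> = (if \<alpha> = \<beta> then Poly_Mapping.lookup q 0 else 0)"
    by simp
  finally show ?thesis .
qed

lemma lookup_linear_comb_monom:
  "Poly_Mapping.lookup (\<Sum>j<m. const (c j) * monom (al j)) \<beta> =
    (\<Sum>j<m. if al j = \<beta> then c j else (0::'a::comm_ring_1))"
  by (simp add: const_mult_monom lookup_sum lookup_single when_def)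

lemma homog_ideal_gen_monoms_linear_comb:
  fixes m :: nat
  assumes p: "p \<in> ideal_gen n (f ` {..<m})" and hp: "homog d p"
    and al: "\<And>j. j < m \<Longrightarrow> f j = monom (al j) \<and> mdeg (al j) = d"
    and inj: "inj_on f {..<m}"
  shows "\<exists>c. (\<forall>j\<ge>m. c j = 0) \<and> p = (\<Sum>j<m. const (c j) * f j)"
proof -
  from p obtain F h where F: "p = (\<Sum>g\<in>F. h g * g)" "finite F" "F \<subseteq> f ` {..<m}"
    unfolding ideal_gen_def by blast
  define G where "G = {j. j < m \<and> f j \<in> F}"
  have FG: "F = f ` G" using F(3) unfolding G_def by auto
  have injG: "inj_on f G" using inj unfolding G_def by (rule inj_on_subset) auto
  define c where "c j = (if j \<in> G then Poly_Mapping.lookup (h (f j)) 0 else 0)" for j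
  have pG: "p = (\<Sum>j\<in>G. h (f j) * monom (al j))"
    unfolding F(1) FG sum.reindex[OF injG] by (rule sum.cong) (auto simp: G_def al)
  have sum_f: "(\<Sum>j<m. const (c j) * f j) = (\<Sum>j<m. const (c j) * monom (al j))"
    using al by simp
  have "Poly_Mapping.lookup p \<beta> = (\<Sum>j<m. if al j = \<beta> then c j else 0)" for \<beta>
  proof (cases "mdeg \<beta> = d")
    case False
    then have "Poly_Mapping.lookup p \<beta> = 0"
      using hp by (auto simp: homog_def in_keys_iff)
    moreover have "(\<Sum>j<m. if al j = \<beta> then c j else 0) = 0"
      using al False by (intro sum.neutral) auto
    ultimately show ?thesis by simp
  next
    case True
    have "Poly_Mapping.lookup p \<beta> = (\<Sum>j\<in>G. if al j = \<beta> then Poly_Mapping.lookup (h (f j)) 0 else 0)"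
      unfolding pG lookup_sum
      by (rule sum.cong) (auto simp: G_def True al lookup_mult_monom_same_degree)
    also have "\<dots> = (\<Sum>j<m. if al j = \<beta> then c j else 0)"
      unfolding c_def by (rule sum.mono_neutral_cong_left) (auto simp: G_def)
    finally show ?thesis .
  qed
  then have "p = (\<Sum>j<m. const (c j) * f j)"
    by (auto intro: poly_mapping_eqI simp: sum_f lookup_linear_comb_monom)
  moreover have "\<forall>j\<ge>m. c j = 0"
    by (auto simp: c_def G_def)
  ultimately show ?thesis by blast
qed

lemma linear_comb_monoms_unique:
  fixes m :: nat
  assumes al: "\<And>j. j < m \<Longrightarrow> f j = monom (al j)"
    and inj: "inj_on f {..<m}"
    and c: "\<forall>j\<ge>m. c j = 0" and c': "\<forall>j\<ge>m. c' j = 0"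
    and eq: "(\<Sum>j<m. const (c j) * f j) = (\<Sum>j<m. const (c' j) * f j)"
  shows "c = (c' :: nat \<Rightarrow> 'a::comm_ring_1)"
proof
  fix k
  show "c k = c' k"
  proof (cases "k < m")
    case True
    have "Poly_Mapping.lookup (\<Sum>j<m. const (b j) * f j) (al k) = b k" for b :: "nat \<Rightarrow> 'a"
    proof -
      have "j < m \<Longrightarrow> al j = al k \<longleftrightarrow> j = k" for j
        using inj al True unfolding inj_on_def by (metis lessThan_iff)
      then have "(\<Sum>j<m. if al j = al k then b j else 0) = (\<Sum>j<m. if j = k then b j else 0)"
        by (intro sum.cong) auto
      then show ?thesis
        using al True by (simp add: lookup_linear_comb_monom[symmetric])
    qed
    then show ?thesis using eq by metis
  qed (use c c' in simp)
qed

lemma mem_ideal_gen: "g \<in> G \<Longrightarrow> g \<in> ideal_gen n G"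
  unfolding ideal_gen_def by (intro CollectI exI[of _ "{g}"] exI[of _ "\<lambda>_. 1"]) simp

lemma act_gen_eq_sum_act_coeff:
  assumes I: "borel_fixed n I" and gens: "min_mon_gens_same_deg n I m f"
    and "invertible_mat n A" "upper_triangular n A" and u: "u < m"
  shows "act n A (f u) = (\<Sum>j<m. const (act_coeff n A m f u j) * f j)"
proof -
  from gens obtain d where d: "\<forall>i<m. \<exists>\<alpha>. f i = monom \<alpha> \<and> Poly_Mapping.keys \<alpha> \<subseteq> {..<n} \<and> mdeg \<alpha> = d"
    and I_gen: "I = ideal_gen n (f ` {..<m})" and inj: "inj_on f {..<m}"
    unfolding min_mon_gens_same_deg_def by blast
  obtain al where al: "\<And>j. j < m \<Longrightarrow> f j = monom (al j) \<and> mdeg (al j) = d"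
    using d by metis
  have "act n A ` I = I"
    using I assms(3,4) unfolding borel_fixed_def by blast
  moreover have "f u \<in> I"
    unfolding I_gen using u by (intro mem_ideal_gen) simp
  ultimately have "act n A (f u) \<in> ideal_gen n (f ` {..<m})"
    using I_gen by blast
  moreover have "homog d (act n A (f u))"
    using al[OF u] homog_act_monomial[of "al u" n A] by (simp add: act_monom)
  ultimately obtain c where c: "(\<forall>j\<ge>m. c j = 0) \<and> act n A (f u) = (\<Sum>j<m. const (c j) * f j)"
    using homog_ideal_gen_monoms_linear_comb al inj by blast
  have "\<exists>!c. (\<forall>j\<ge>m. c j = 0) \<and> act n A (f u) = (\<Sum>j<m. const (c j) * f j)"
    using c linear_comb_monoms_unique[of m f al, OF _ inj] al by (intro ex1I[of _ c]) auto
  then show ?thesis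
    unfolding act_coeff_def by (rule theI'[THEN conjunct2])
qed


section \<open>Contraction of wedge products of vectors\<close>

text \<open>\<open>count_below x V\<close> is the number of transpositions needed to move \<open>e\<^sub>x\<close> past \<open>e\<^sub>V\<close>;
  \<open>wedge_vec m a Q\<close> is \<open>(\<Sum>\<^sub>i a\<^sub>i e\<^sub>i) \<and> Q\<close> and \<open>contract j\<close> is the interior product with the
  dual basis vector \<open>e\<^sub>j\<^sup>*\<close>.\<close>

definition ext_vec :: "nat \<Rightarrow> (nat \<Rightarrow> 'a::comm_ring_1) \<Rightarrow> nat set \<Rightarrow> 'a" where
  "ext_vec m c W = (if \<exists>j<m. W = {j} then c (THE j. W = {j}) else 0)"

definition count_below :: "nat \<Rightarrow> nat set \<Rightarrow> nat" where
  "count_below x V = card {v\<in>V. v < x}"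

definition wedge_vec :: "nat \<Rightarrow> (nat \<Rightarrow> 'a::comm_ring_1) \<Rightarrow> (nat set \<Rightarrow> 'a) \<Rightarrow> nat set \<Rightarrow> 'a" where
  "wedge_vec m a Q W =
    (if W \<subseteq> {..<m} then (\<Sum>w\<in>W. (-1) ^ count_below w W * a w * Q (W - {w})) else 0)"

definition wedge_vecs :: "nat \<Rightarrow> (nat \<Rightarrow> nat \<Rightarrow> 'a::comm_ring_1) \<Rightarrow> nat set \<Rightarrow> nat set \<Rightarrow> 'a" where
  "wedge_vecs m c U = foldr (ext_mult m) (map (\<lambda>i. ext_vec m (c i)) (sorted_list_of_set U)) ext_one"

definition contract :: "nat \<Rightarrow> (nat set \<Rightarrow> 'a::comm_ring_1) \<Rightarrow> nat set \<Rightarrow> 'a" where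
  "contract j x V = (if j \<notin> V then (-1) ^ count_below j V * x (insert j V) else 0)"

lemma ext_vec_singleton: "j < m \<Longrightarrow> ext_vec m c {j} = c j"
  by (auto simp: ext_vec_def)

lemma ext_mult_summand_singleton:
  assumes j: "j < m"
  shows "(\<Sum>V\<in>Pow {..<m}. if {j} \<inter> V = {} \<and> {j} \<union> V = W
      then (-1) ^ card {(u, v). u \<in> {j} \<and> v \<in> V \<and> v < u} * ext_vec m c {j} * Q V else 0)
    = (if j \<in> W \<and> W \<subseteq> {..<m} then (-1) ^ count_below j W * c j * Q (W - {j}) else (0::'a::comm_ring_1))"
proof (cases "j \<in> W \<and> W \<subseteq> {..<m}")
  case True
  have cond: "V \<in> Pow {..<m} \<Longrightarrow> ({j} \<inter> V = {} \<and> {j} \<union> V = W) \<longleftrightarrow> V = W - {j}" for V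
    using True by auto
  have "(\<Sum>V\<in>Pow {..<m}. if {j} \<inter> V = {} \<and> {j} \<union> V = W
      then (-1) ^ card {(u, v). u \<in> {j} \<and> v \<in> V \<and> v < u} * ext_vec m c {j} * Q V else 0)
    = (\<Sum>V\<in>Pow {..<m}. if V = W - {j}
      then (-1) ^ card {(u, v). u \<in> {j} \<and> v \<in> V \<and> v < u} * ext_vec m c {j} * Q V else 0)"
    by (rule sum.cong) (simp_all only: cond)
  also have "\<dots> = (-1) ^ card {(u, v). u \<in> {j} \<and> v \<in> W - {j} \<and> v < u} * ext_vec m c {j} * Q (W - {j})"
    using True by (subst sum.delta) auto
  also have "{(u, v). u \<in> {j} \<and> v \<in> W - {j} \<and> v < u} = (\<lambda>v. (j, v)) ` {v\<in>W. v < j}"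
    by auto
  also have "card \<dots> = count_below j W"
    unfolding count_below_def by (rule card_image) (auto simp: inj_on_def)
  finally show ?thesis using True j by (simp add: ext_vec_singleton)
next
  case False
  then have "V \<in> Pow {..<m} \<Longrightarrow> \<not> ({j} \<inter> V = {} \<and> {j} \<union> V = W)" for V
    using j by auto
  with False show ?thesis
    by (intro trans[OF sum.neutral]) auto
qed

lemma ext_mult_ext_vec: "ext_mult m (ext_vec m c) Q W = wedge_vec m c Q W"
proof -
  let ?G = "\<lambda>U. \<Sum>V\<in>Pow {..<m}. if U \<inter> V = {} \<and> U \<union> V = W
      then (-1) ^ card {(u, v). u \<in> U \<and> v \<in> V \<and> v < u} * ext_vec m c U * Q V else 0"
  have "ext_mult m (ext_vec m c) Q W = (\<Sum>U\<in>Pow {..<m}. ?G U)"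
    by (simp add: ext_mult_def)
  also have "\<dots> = (\<Sum>U\<in>(\<lambda>j. {j}) ` {..<m}. ?G U)"
  proof (rule sum.mono_neutral_right)
    show "\<forall>U\<in>Pow {..<m} - (\<lambda>j. {j}) ` {..<m}. ?G U = 0"
    proof
      fix U assume "U \<in> Pow {..<m} - (\<lambda>j. {j}) ` {..<m}"
      then have "ext_vec m c U = 0" by (auto simp: ext_vec_def)
      then show "?G U = 0" by (intro sum.neutral) simp
    qed
  qed auto
  also have "\<dots> = (\<Sum>j<m. ?G {j})"
    by (subst sum.reindex) (auto simp: inj_on_def)
  also have "\<dots> = (\<Sum>j<m. if j \<in> W \<and> W \<subseteq> {..<m} then (-1) ^ count_below j W * c j * Q (W - {j}) else 0)"
    by (rule sum.cong) (simp_all only: ext_mult_summand_singleton lessThan_iff)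
  also have "\<dots> = wedge_vec m c Q W"
  proof (cases "W \<subseteq> {..<m}")
    case True
    then have "{j. j < m \<and> j \<in> W} = W" by auto
    with True show ?thesis by (simp add: wedge_vec_def sum.inter_filter[symmetric])
  qed (simp add: wedge_vec_def)
  finally show ?thesis .
qed

lemma wedge_vecs_empty: "wedge_vecs m c {} = ext_one"
  by (simp add: wedge_vecs_def)

lemma wedge_vecs_insert_min:
  assumes "finite U" "\<forall>x\<in>U. b < x"
  shows "wedge_vecs m c (insert b U) = wedge_vec m (c b) (wedge_vecs m c U)"
proof -
  have "Min (insert b U) = b" using assms by (intro Min_eqI) auto
  moreover have "insert b U - {b} = U" using assms by auto
  ultimately have "sorted_list_of_set (insert b U) = b # sorted_list_of_set U"
    using sorted_list_of_set_nonempty[of "insert b U"] assms by simp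
  then show ?thesis
    by (simp add: wedge_vecs_def ext_mult_ext_vec fun_eq_iff)
qed

lemma wedge_vec_nonzero:
  assumes "wedge_vec m a Q W \<noteq> 0"
  shows "W \<subseteq> {..<m} \<and> (\<exists>w\<in>W. Q (W - {w}) \<noteq> 0)"
proof -
  have W: "W \<subseteq> {..<m}" using assms by (simp add: wedge_vec_def split: if_splits)
  with assms obtain w where "w \<in> W" "(-1) ^ count_below w W * a w * Q (W - {w}) \<noteq> 0"
    by (auto simp: wedge_vec_def elim!: sum.not_neutral_contains_not_neutral)
  with W show ?thesis by (metis mult_zero_right)
qed

lemma wedge_vecs_nonzero:
  assumes "finite U" "wedge_vecs m c U W \<noteq> 0"
  shows "W \<subseteq> {..<m} \<and> card W = card U"
  using assms
proof (induction U arbitrary: W rule: finite_linorder_min_induct)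
  case empty
  then show ?case by (simp add: wedge_vecs_empty ext_one_def split: if_splits)
next
  case (insert b U)
  then obtain w where W: "W \<subseteq> {..<m}" "w \<in> W" "wedge_vecs m c U (W - {w}) \<noteq> 0"
    using wedge_vec_nonzero by (metis wedge_vecs_insert_min)
  with insert.IH have "card (W - {w}) = card U" by blast
  moreover have "finite W" using W(1) finite_subset by blast
  moreover have "b \<notin> U" using insert.hyps by auto
  ultimately have "card W = card (insert b U)"
    using W(2) insert.hyps(1) by (simp add: card_Diff_singleton_if)
      (metis One_nat_def Suc_pred card_gt_0_iff empty_iff)
  with W show ?case by simp
qed

lemma count_below_insert:
  assumes "finite V" "j \<notin> V"
  shows "count_below w (insert j V) = count_below w V + (if j < w then 1 else 0)"
proof (cases "j < w")
  case True
  then have "{v\<in>insert j V. v < w} = insert j {v\<in>V. v < w}" by auto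
  then show ?thesis using True assms by (simp add: count_below_def)
next
  case False
  then have "{v\<in>insert j V. v < w} = {v\<in>V. v < w}" by auto
  then show ?thesis using False by (simp add: count_below_def)
qed

lemma count_below_remove:
  "finite V \<Longrightarrow> w \<in> V \<Longrightarrow> count_below j V = count_below j (V - {w}) + (if w < j then 1 else 0)"
  using count_below_insert[of "V - {w}" w j] by (simp add: insert_absorb)

lemma count_below_insert_self: "count_below j (insert j V) = count_below j V"
  unfolding count_below_def by (rule arg_cong[where f=card]) auto

lemma count_below_remove_self: "count_below j (V - {j}) = count_below j V"
  unfolding count_below_def by (rule arg_cong[where f=card]) auto

text \<open>Moving \<open>e\<^sub>j\<close> and \<open>e\<^sub>w\<close> past each other costs exactly one sign.\<close>

lemma count_below_sign_swap:
  assumes "finite V" "j \<notin> V" "w \<in> V"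
  shows "(-1::'a::comm_ring_1) ^ count_below j V * (-1) ^ count_below w (insert j V)
    = - ((-1) ^ count_below w V * (-1) ^ count_below j (V - {w}))"
proof -
  have "w \<noteq> j" using assms by auto
  then show ?thesis
    using count_below_insert[of V j w] count_below_remove[of V w j] assms
    by (cases "w < j") (simp_all add: power_add mult_ac)
qed

lemma wedge_vec_sum_right:
  "wedge_vec m a (\<lambda>W. \<Sum>u\<in>S. k u * P u W) V = (\<Sum>u\<in>S. k u * wedge_vec m a (P u) V)"
  by (simp add: wedge_vec_def sum_distrib_left sum_distrib_right mult_ac sum.swap[where A=S])

lemma contract_wedge_vec:
  assumes j: "j < m" and supp: "\<And>W. Q W \<noteq> 0 \<Longrightarrow> W \<subseteq> {..<m}"
  shows "contract j (wedge_vec m a Q) V = a j * Q V - wedge_vec m a (contract j Q) V"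
proof (cases "V \<subseteq> {..<m}")
  case False
  then have "Q V = 0" using supp by blast
  moreover have "\<not> insert j V \<subseteq> {..<m}" using False by auto
  ultimately show ?thesis using False by (simp add: contract_def wedge_vec_def)
next
  case Vm: True
  then have fin: "finite V" using finite_subset by blast
  show ?thesis
  proof (cases "j \<in> V")
    case False
    have "contract j (wedge_vec m a Q) V = (-1) ^ count_below j V *
        (\<Sum>w\<in>insert j V. (-1) ^ count_below w (insert j V) * a w * Q (insert j V - {w}))"
      using False Vm j by (simp add: contract_def wedge_vec_def)
    also have "\<dots> = a j * Q V +
        (\<Sum>w\<in>V. (-1) ^ count_below j V * (-1) ^ count_below w (insert j V) * a w * Q (insert j V - {w}))"
      using False fin by (simp add: distrib_left sum_distrib_left count_below_insert_self mult_ac)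
    also have "(\<Sum>w\<in>V. (-1) ^ count_below j V * (-1) ^ count_below w (insert j V) * a w * Q (insert j V - {w}))
        = (\<Sum>w\<in>V. - ((-1) ^ count_below w V * a w * ((-1) ^ count_below j (V - {w}) * Q (insert j (V - {w})))))"
    proof (rule sum.cong)
      fix w assume w: "w \<in> V"
      then have "insert j V - {w} = insert j (V - {w})" using False by auto
      then show "(-1) ^ count_below j V * (-1) ^ count_below w (insert j V) * a w * Q (insert j V - {w}) =
          - ((-1) ^ count_below w V * a w * ((-1) ^ count_below j (V - {w}) * Q (insert j (V - {w}))))"
        using count_below_sign_swap[OF fin False w, where 'a='a] by (simp add: mult_ac)
    qed simp
    also have "\<dots> = - wedge_vec m a (contract j Q) V"
      using Vm False by (simp add: wedge_vec_def contract_def sum_negf)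
    finally show ?thesis by simp
  next
    case True
    have "wedge_vec m a (contract j Q) V = (-1) ^ count_below j V * a j * contract j Q (V - {j})"
      using Vm True fin by (simp add: wedge_vec_def sum.remove contract_def)
    also have "\<dots> = a j * Q V"
      using True by (simp add: contract_def count_below_remove_self insert_absorb mult_ac)
    finally show ?thesis
      using True by (simp add: contract_def)
  qed
qed

lemma contract_wedge_vecs:
  assumes "finite U" "j < m"
  shows "contract j (wedge_vecs m c U) V =
    (\<Sum>u\<in>U. (-1) ^ count_below u U * c u j * wedge_vecs m c (U - {u}) V)"
  using assms(1)
proof (induction U arbitrary: V rule: finite_linorder_min_induct)
  case empty
  then show ?case by (simp add: wedge_vecs_empty contract_def ext_one_def)
next
  case (insert b U)
  have bU: "b \<notin> U" using insert.hyps by auto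
  have remove: "wedge_vec m (c b) (wedge_vecs m c (U - {u})) = wedge_vecs m c (insert b U - {u})"
    if "u \<in> U" for u
  proof -
    have "insert b U - {u} = insert b (U - {u})" using that bU by auto
    then show ?thesis using wedge_vecs_insert_min[of "U - {u}" b m c] insert.hyps by auto
  qed
  have "contract j (wedge_vecs m c (insert b U)) V
      = c b j * wedge_vecs m c U V - wedge_vec m (c b) (contract j (wedge_vecs m c U)) V"
    unfolding wedge_vecs_insert_min[OF insert.hyps]
    by (rule contract_wedge_vec[OF assms(2)]) (use wedge_vecs_nonzero insert.hyps in blast)
  also have "contract j (wedge_vecs m c U) =
      (\<lambda>V. \<Sum>u\<in>U. ((-1) ^ count_below u U * c u j) * wedge_vecs m c (U - {u}) V)"
    using insert.IH by (simp add: fun_eq_iff mult_ac)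
  also have "wedge_vec m (c b) \<dots> V =
      (\<Sum>u\<in>U. ((-1) ^ count_below u U * c u j) * wedge_vecs m c (insert b U - {u}) V)"
    by (simp add: wedge_vec_sum_right remove)
  also have "c b j * wedge_vecs m c U V - \<dots> =
      (\<Sum>u\<in>insert b U. (-1) ^ count_below u (insert b U) * c u j * wedge_vecs m c (insert b U - {u}) V)"
  proof -
    have "count_below b (insert b U) = 0"
      using insert.hyps unfolding count_below_def by auto
    moreover have "insert b U - {b} = U" using bU by auto
    moreover have "\<And>u. u \<in> U \<Longrightarrow> count_below u (insert b U) = count_below u U + 1"
      using count_below_insert[of U b] insert.hyps bU by auto
    ultimately show ?thesis
      using insert.hyps bU by (simp add: sum_negf[symmetric])
  qed
  finally show ?case .
qed


section \<open>\<open>\<phi>\<^sup>~\<close> is a chain map\<close>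

lemma act_wedge_eq_wedge_vecs: "act_wedge n A m f = wedge_vecs m (act_coeff n A m f)"
proof -
  have "act_e n A m f = (\<lambda>i. ext_vec m (act_coeff n A m f i))"
    by (simp add: fun_eq_iff act_e_def ext_vec_def)
  then show ?thesis
    by (intro ext) (simp add: act_wedge_def wedge_vecs_def)
qed

lemma sum_Pow_Diff_eq_sum_Pow_remove:
  assumes "finite S"
  shows "(\<Sum>U'\<in>Pow S. \<Sum>u\<in>S - U'. g U' u) = (\<Sum>U\<in>Pow S. \<Sum>u\<in>U. g (U - {u}) u)"
proof -
  have "(\<Sum>U'\<in>Pow S. \<Sum>u\<in>S - U'. g U' u) = (\<Sum>(U', u)\<in>Sigma (Pow S) (\<lambda>U'. S - U'). g U' u)"
    using assms by (intro sum.Sigma) auto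
  also have "\<dots> = (\<Sum>(U, u)\<in>Sigma (Pow S) (\<lambda>U. U). g (U - {u}) u)"
    by (rule sum.reindex_bij_witness[where i="\<lambda>(U, u). (U - {u}, u)" and j="\<lambda>(U', u). (insert u U', u)"])
      (auto simp: insert_absorb)
  also have "\<dots> = (\<Sum>U\<in>Pow S. \<Sum>u\<in>U. g (U - {u}) u)"
    using assms by (intro sum.Sigma[symmetric]) (auto intro: finite_subset)
  finally show ?thesis .
qed

lemma koszul_d_koszul_act_expand:
  "koszul_d m f (koszul_act n A m f z) V = (\<Sum>U\<in>Pow {..<m}. \<Sum>j<m.
      const (contract j (wedge_vecs m (act_coeff n A m f) U) V) * f j * act n A (z U))"
proof -
  let ?W = "wedge_vecs m (act_coeff n A m f)"
  have "koszul_d m f (koszul_act n A m f z) V = (\<Sum>u\<in>{..<m} - V.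
      (-1) ^ count_below u V * f u * (\<Sum>U\<in>Pow {..<m}. const (?W U (insert u V)) * act n A (z U)))"
    by (simp add: koszul_d_def koszul_act_def act_wedge_eq_wedge_vecs count_below_def)
  also have "\<dots> = (\<Sum>j<m. \<Sum>U\<in>Pow {..<m}. const (contract j (?W U) V) * f j * act n A (z U))"
    by (rule sum.mono_neutral_cong_left)
      (auto simp: contract_def const_mult const_minus_one_power sum_distrib_left mult_ac)
  finally show ?thesis
    by (simp only: sum.swap[of _ "{..<m}"])
qed

lemma koszul_act_koszul_d_expand:
  assumes coeff: "\<And>u. u < m \<Longrightarrow> act n A (f u) = (\<Sum>j<m. const (act_coeff n A m f u j) * f j)"
  shows "koszul_act n A m f (koszul_d m f z) V = (\<Sum>U\<in>Pow {..<m}. \<Sum>j<m.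
      const (contract j (wedge_vecs m (act_coeff n A m f) U) V) * f j * act n A (z U))"
proof -
  let ?c = "act_coeff n A m f"
  let ?W = "wedge_vecs m ?c"
  let ?Z = "\<lambda>U. act n A (z U)"
  have "koszul_act n A m f (koszul_d m f z) V = (\<Sum>U'\<in>Pow {..<m}. \<Sum>u\<in>{..<m} - U'.
      const (?W U' V) * ((-1) ^ count_below u U' * act n A (f u) * ?Z (insert u U')))"
    by (simp add: koszul_d_def koszul_act_def act_wedge_eq_wedge_vecs count_below_def
        act_sum act_mult act_minus_one_power sum_distrib_left)
  also have "\<dots> = (\<Sum>U\<in>Pow {..<m}. \<Sum>u\<in>U.
      const (?W (U - {u}) V) * ((-1) ^ count_below u (U - {u}) * act n A (f u) * ?Z (insert u (U - {u}))))"
    by (rule sum_Pow_Diff_eq_sum_Pow_remove) simp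
  also have "\<dots> = (\<Sum>U\<in>Pow {..<m}. \<Sum>u\<in>U. \<Sum>j<m.
      const ((-1) ^ count_below u U * ?c u j * ?W (U - {u}) V) * f j * ?Z U)"
  proof (intro sum.cong refl)
    fix U u assume "U \<in> Pow {..<m}" "u \<in> U"
    then have "u < m" "insert u (U - {u}) = U" by auto
    then show "const (?W (U - {u}) V) * ((-1) ^ count_below u (U - {u}) * act n A (f u) * ?Z (insert u (U - {u}))) =
        (\<Sum>j<m. const ((-1) ^ count_below u U * ?c u j * ?W (U - {u}) V) * f j * ?Z U)"
      by (simp add: coeff count_below_remove_self sum_distrib_left sum_distrib_right
          const_mult const_minus_one_power mult_ac)
  qed
  also have "\<dots> = (\<Sum>U\<in>Pow {..<m}. \<Sum>j<m. const (contract j (?W U) V) * f j * ?Z U)"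
  proof (rule sum.cong[OF refl])
    fix U assume "U \<in> Pow {..<m}"
    then have "finite U" by (auto intro: finite_subset)
    then show "(\<Sum>u\<in>U. \<Sum>j<m. const ((-1) ^ count_below u U * ?c u j * ?W (U - {u}) V) * f j * ?Z U) =
        (\<Sum>j<m. const (contract j (?W U) V) * f j * ?Z U)"
      by (simp add: sum.swap[of _ U] contract_wedge_vecs const_sum sum_distrib_right)
  qed
  finally show ?thesis .
qed

lemma koszul_d_koszul_act:
  assumes "\<And>u. u < m \<Longrightarrow> act n A (f u) = (\<Sum>j<m. const (act_coeff n A m f u j) * f j)"
  shows "koszul_d m f (koszul_act n A m f z) = koszul_act n A m f (koszul_d m f z)"
  by (intro ext) (simp only: koszul_d_koszul_act_expand koszul_act_koszul_d_expand[OF assms])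

lemma koszul_elem_koszul_act:
  assumes "koszul_elem n m t z"
  shows "koszul_elem n m t (koszul_act n A m f z)"
  unfolding koszul_elem_def
proof (intro conjI allI impI)
  fix W
  show "in_S n (koszul_act n A m f z W)"
    unfolding koszul_act_def by (intro in_S_sum in_S_mult in_S_const in_S_act)
next
  fix W assume W: "\<not> (W \<subseteq> {..<m} \<and> card W = t)"
  have "const (wedge_vecs m (act_coeff n A m f) U W) * act n A (z U) = 0" if "U \<subseteq> {..<m}" for U
  proof (cases "card U = t")
    case True
    then have "wedge_vecs m (act_coeff n A m f) U W = 0"
      using wedge_vecs_nonzero[of U m _ W] W that finite_subset by auto
    then show ?thesis by simp
  next
    case False
    then have "z U = 0" using assms unfolding koszul_elem_def by blast
    then show ?thesis by simp
  qed
  then show "koszul_act n A m f z W = 0"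
    unfolding koszul_act_def act_wedge_eq_wedge_vecs by (intro sum.neutral) auto
qed

lemma is_ideal_sum: "is_ideal n J \<Longrightarrow> (\<And>x. x \<in> S \<Longrightarrow> g x \<in> J) \<Longrightarrow> sum g S \<in> J"
  by (induct S rule: infinite_finite_induct) (auto simp: is_ideal_def)

lemma koszul_act_mem_ideal:
  assumes J: "is_ideal n J" "act n A ` J \<subseteq> J" and w: "\<And>U. w U \<in> J"
  shows "koszul_act n A m f w V \<in> J"
  unfolding koszul_act_def
proof (rule is_ideal_sum[OF J(1)])
  fix U
  have "act n A (w U) \<in> J" using w J(2) by blast
  then show "const (act_wedge n A m f U V) * act n A (w U) \<in> J"
    using J(1) by (simp add: is_ideal_def)
qed

theorem lemma4p1:
  fixes n m :: nat
    and I J :: "'a::field_char_0 mpoly set"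
    and f :: "nat \<Rightarrow> 'a mpoly"
    and A :: "nat \<Rightarrow> nat \<Rightarrow> 'a"
  assumes "borel_fixed n I" and "borel_fixed n J"
    and "min_mon_gens_same_deg n I m f"
    and "invertible_mat n A" and "upper_triangular n A"
  shows "\<forall>t z. koszul_cycle n m f J t z \<longrightarrow> koszul_cycle n m f J t (koszul_act n A m f z)"
proof (intro allI impI)
  fix t z assume "koszul_cycle n m f J t z"
  then have z: "koszul_elem n m t z" "\<And>V. koszul_d m f z V \<in> J"
    by (auto simp: koszul_cycle_def)
  have J: "is_ideal n J" "act n A ` J \<subseteq> J"
    using assms(2,4,5) by (auto simp: borel_fixed_def monomial_ideal_def)
  have "koszul_d m f (koszul_act n A m f z) = koszul_act n A m f (koszul_d m f z)"
    using act_gen_eq_sum_act_coeff[OF assms(1,3,4,5)] by (rule koszul_d_koszul_act)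
  with koszul_act_mem_ideal[OF J z(2)] koszul_elem_koszul_act[OF z(1)]
  show "koszul_cycle n m f J t (koszul_act n A m f z)"
    by (simp add: koszul_cycle_def)
qed

end
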